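(* Let $\kappa=1$ and, for $\sigma\in[0,1]$ and $h>0$, define $$f(\sigma,h^{-1})=-\tfrac14\pi+\Im\log\Gamma\big(\tfrac34-\tfrac12\sigma+\tfrac12 i\kappa h^{-1}\big)-\Im\log\Gamma\big(\tfrac14-\tfrac12\sigma+\tfrac12 i\kappa h^{-1}\big).$$ Then for all $0<h^{-1}<\infty$ we have $-\frac\pi2<f(0,h^{-1})<0$ and $0<f(1,h^{-1})<\pi$, and $\partial_\sigma f(\sigma,h^{-1})>0$ for all $0<\sigma<1$ and $0<h^{-1}<\infty$. Hence for each $0<h^{-1}<\infty$ there exists a unique $\sigma(h)\in(0,1)$ such that $f(\sigma(h),h^{-1})=0$, and there are no solutions $\sigma\in(0,1)$ of $f(\sigma,h^{-1})=2\pi n$ for integers $n\neq0$.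
   Context: $\log\Gamma$ denotes the branch of the logarithm of the Gamma function which is analytic on $\mathbb{C}\setminus(-\infty,0]$ and satisfies $\log\Gamma(1)=0$. (This $f$ equals $\Im\log A(\lambda)$ for $A(\lambda)=e^{-i\pi/4}\sqrt2\,\Gamma(\frac34-\frac12 i\lambda)/\Gamma(\frac14-\frac12 i\lambda)$, $\lambda=-\kappa h^{-1}-i\sigma$, with this choice of branch.) *)

theory Defs
  imports "HOL-Analysis.Analysis"
begin

text \<open>kappa = 1; t stands for h^{-1}. ln_Gamma on complex is the principal branch of
  log Gamma, analytic off the non-positive reals, with ln_Gamma 1 = 0.\<close>
definition kappa :: real where "kappa = 1"

definition fgam :: "real \<Rightarrow> real \<Rightarrow> real" where
  "fgam \<sigma> t = - pi / 4
     + Im (ln_Gamma (Complex (3/4 - \<sigma>/2) (kappa * t / 2)))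
     - Im (ln_Gamma (Complex (1/4 - \<sigma>/2) (kappa * t / 2)))"

end

theory Submission
  imports Defs
begin

(* Write y = t/2 and let \<phi>(y) be the continuous branch Im log \<Gamma>(3/4+iy) - Im log \<Gamma>(1/4+iy).
   By reflection, \<Gamma>(3/4+iy)/\<Gamma>(1/4+iy) is a positive multiple of sin(\<pi>(1/4+iy)), whose argument
   arctan (tanh (\<pi>y)) lies in (-\<pi>/4, \<pi>/4); so \<phi> stays within \<pi>/4 of 2\<pi>\<int>, and being continuous
   with \<phi>(0) = 0 it never leaves (-\<pi>/4, \<pi>/4). Hence f(0) = -\<pi>/4 + \<phi>(y) lies in (-\<pi>/2, 0).
   Telescoping the Weierstrass product gives Im log \<Gamma>(z+1) = Im log \<Gamma>(z) + arg z, which turns f(1)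
   into -\<pi>/4 - \<phi>(y) + arg(-1/4+iy) with the argument in (\<pi>/2, \<pi>). Finally \<partial>\<^sub>\<sigma>f is a difference of
   imaginary parts of digamma values, positive termwise in the series for \<psi>, so f increases from a
   value in (-\<pi>/2, 0) to one in (0, \<pi>): one zero, and no other multiple of 2\<pi>. *)

lemma Im_Digamma_Complex_less:
  fixes b b' y :: real
  assumes "b < b'" "0 < b + b'" "0 < y"
  shows "Im (Digamma (Complex b' y)) < Im (Digamma (Complex b y))"
proof -
  define A where "A = Complex b' y"
  define B where "B = Complex b y"
  define u where "u z k = inverse (of_nat (Suc k)) - inverse (z + of_nat k)" for z :: complex and k :: nat
  have "A \<noteq> 0" "B \<noteq> 0" using \<open>0 < y\<close> by (auto simp: A_def B_def complex_eq_iff)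
  then have "u A sums (Digamma A + euler_mascheroni)" "u B sums (Digamma B + euler_mascheroni)"
    unfolding u_def Digamma_def using summable_Digamma[THEN summable_sums] by auto
  then have sums: "(\<lambda>k. Im (u B k - u A k)) sums Im (Digamma B - Digamma A)"
    using sums_Im[OF sums_diff] by fastforce
  have "Im (u B k - u A k) = y / ((b + k)\<^sup>2 + y\<^sup>2) - y / ((b' + k)\<^sup>2 + y\<^sup>2)" for k
    by (simp add: u_def A_def B_def Im_divide power2_eq_square)
  moreover have "y / ((b' + k)\<^sup>2 + y\<^sup>2) < y / ((b + k)\<^sup>2 + y\<^sup>2)" for k :: nat
  proof -
    have "0 < (b' - b) * (b + b' + 2 * k)"
      using assms by (intro mult_pos_pos) auto
    then have "(b + k)\<^sup>2 < (b' + k)\<^sup>2"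
      by (simp add: power2_eq_square algebra_simps)
    moreover have "0 < (b + k)\<^sup>2 + y\<^sup>2"
      using \<open>0 < y\<close> by (simp add: add_nonneg_pos)
    ultimately show ?thesis
      using \<open>0 < y\<close> by (intro divide_strict_left_mono) (simp_all add: mult_pos_pos)
  qed
  ultimately have "0 < Im (u B k - u A k)" for k
    by simp
  with sums have "0 < Im (Digamma B - Digamma A)"
    using sums_unique[OF sums] suminf_pos[OF sums_summable[OF sums]] by simp
  then show ?thesis
    by (simp add: A_def B_def)
qed

lemma has_real_derivative_Im_ln_Gamma_Complex:
  assumes "y \<noteq> 0"
  shows "((\<lambda>x. Im (ln_Gamma (Complex x y))) has_real_derivative Im (Digamma (Complex x y))) (at x)"
proof -
  have line: "((\<lambda>x. Complex x y) has_vector_derivative 1) (at x)"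
    unfolding Complex_eq by (auto intro!: derivative_eq_intros)
  have "(ln_Gamma has_field_derivative Digamma (Complex x y)) (at (Complex x y))"
    using assms by (intro has_field_derivative_ln_Gamma_complex) (simp add: complex_nonpos_Reals_iff)
  from field_vector_diff_chain_at[OF line this]
  have "((\<lambda>x. ln_Gamma (Complex x y)) has_vector_derivative Digamma (Complex x y)) (at x)"
    by (simp add: o_def)
  then have "((\<lambda>x. Im (ln_Gamma (Complex x y))) has_vector_derivative Im (Digamma (Complex x y))) (at x)"
    by (rule bounded_linear.has_vector_derivative[OF bounded_linear_Im])
  then show ?thesis
    by (simp add: has_real_derivative_iff_has_vector_derivative)
qed

lemma continuous_on_Im_ln_Gamma_Complex:
  assumes "0 < c"
  shows "continuous_on A (\<lambda>y. Im (ln_Gamma (Complex c y)))"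
proof -
  have "continuous_on A (\<lambda>y. ln_Gamma (of_real c + \<i> * of_real y))"
    using assms by (intro continuous_at_imp_continuous_on ballI continuous_intros)
      (auto simp: complex_nonpos_Reals_iff)
  then show ?thesis
    unfolding Complex_eq by (rule continuous_on_Im)
qed

lemma add_of_nat_neq_0_if_notin_nonpos_Ints:
  fixes z :: complex
  assumes "z \<notin> \<int>\<^sub>\<le>\<^sub>0"
  shows "z + of_nat k \<noteq> 0"
  using assms by (metis add.commute add_eq_0_iff minus_of_nat_in_nonpos_Ints)

lemma Im_Ln_divide_of_nat_add_1:
  fixes z :: complex
  assumes "z + of_nat k \<noteq> 0" "k > 0"
  shows "Im (Ln (z / of_nat k + 1)) = Im (Ln (z + of_nat k))"
proof -
  have "z / of_nat k + 1 = (z + of_nat k) / of_real (real k)"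
    using assms by (simp add: field_simps)
  then show ?thesis
    using Ln_divide_of_real[of "real k" "z + of_nat k"] assms by simp
qed

lemma Im_Ln_add_of_nat_LIMSEQ:
  fixes z :: complex
  shows "(\<lambda>n. Im (Ln (z + of_nat n))) \<longlonglongrightarrow> 0"
proof -
  have "eventually (\<lambda>n. Im (Ln (z / of_nat n + 1)) = Im (Ln (z + of_nat n))) sequentially"
  proof (rule eventually_mono[OF eventually_gt_at_top[of "nat \<lceil>cmod z\<rceil>"]])
    fix n assume "nat \<lceil>cmod z\<rceil> < n"
    then have "cmod z < real n"
      by linarith
    then have "z + of_nat n \<noteq> 0"
      by (metis add_eq_0_iff norm_minus_cancel norm_of_nat order_less_irrefl)
    with \<open>nat \<lceil>cmod z\<rceil> < n\<close> show "Im (Ln (z / of_nat n + 1)) = Im (Ln (z + of_nat n))"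
      by (intro Im_Ln_divide_of_nat_add_1) auto
  qed
  moreover have "(\<lambda>n. Im (Ln (z / of_nat n + 1))) \<longlonglongrightarrow> Im (Ln (0 + 1))"
    by (intro tendsto_intros tendsto_divide_0[OF tendsto_const] filterlim_at_top_imp_at_infinity
        filterlim_of_nat_at_top) auto
  ultimately show ?thesis
    by (simp add: Lim_transform_eventually)
qed

lemma Im_ln_Gamma_series_plus1:
  fixes z :: complex
  assumes "z \<notin> \<int>\<^sub>\<le>\<^sub>0" "n > 0"
  shows "Im (ln_Gamma_series (z + 1) n)
           = Im (ln_Gamma_series z n) + Im (Ln z) - Im (Ln (z + of_nat (Suc n)))"
proof -
  define a where "a k = Im (Ln (z + of_nat k))" for k
  have shifted: "(\<Sum>k=1..n. Im (ln ((z + 1) / of_nat k + 1))) = (\<Sum>k=1..n. a (Suc k))"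
  proof (rule sum.cong)
    fix k assume "k \<in> {1..n}"
    moreover have "z + 1 + of_nat k = z + of_nat (Suc k)"
      by simp
    ultimately show "Im (ln ((z + 1) / of_nat k + 1)) = a (Suc k)"
      using Im_Ln_divide_of_nat_add_1[of "z + 1" k] add_of_nat_neq_0_if_notin_nonpos_Ints[OF assms(1)]
      unfolding a_def by (metis atLeastAtMost_iff less_le_trans zero_less_one)
  qed simp
  have unshifted: "(\<Sum>k=1..n. Im (ln (z / of_nat k + 1))) = (\<Sum>k=1..n. a k)"
    using Im_Ln_divide_of_nat_add_1[of z] add_of_nat_neq_0_if_notin_nonpos_Ints[OF assms(1)]
    by (intro sum.cong) (auto simp: a_def)
  have "(\<Sum>k=1..n. a (Suc k)) - (\<Sum>k=1..n. a k) = a (Suc n) - a 1"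
    using sum_Suc_diff[of 1 n a] assms(2) by (simp add: sum_subtractf)
  moreover have Im_mult_ln: "Im (w * ln (of_nat n)) = Im w * ln (real n)" for w :: complex
    using assms(2) by simp
  ultimately show ?thesis
    unfolding ln_Gamma_series_def minus_complex.sel Im_mult_ln Im_sum shifted unshifted
    by (simp add: a_def algebra_simps)
qed

lemma Im_ln_Gamma_plus1:
  fixes z :: complex
  assumes "z \<notin> \<int>\<^sub>\<le>\<^sub>0"
  shows "Im (ln_Gamma (z + 1)) = Im (ln_Gamma z) + Im (Ln z)"
proof -
  have "z + 1 \<notin> \<int>\<^sub>\<le>\<^sub>0"
    using assms plus_one_in_nonpos_Ints_imp by blast
  then have lim: "(\<lambda>n. Im (ln_Gamma_series (z + 1) n)) \<longlonglongrightarrow> Im (ln_Gamma (z + 1))"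
    by (intro tendsto_Im ln_Gamma_complex_LIMSEQ)
  have "(\<lambda>n. Im (ln_Gamma_series z n) + Im (Ln z) - Im (Ln (z + of_nat (Suc n))))
      \<longlonglongrightarrow> Im (ln_Gamma z) + Im (Ln z) - 0"
    using Im_Ln_add_of_nat_LIMSEQ[of z, THEN LIMSEQ_Suc] ln_Gamma_complex_LIMSEQ[OF assms]
    by (intro tendsto_diff tendsto_add tendsto_Im tendsto_const)
  moreover have "eventually (\<lambda>n. Im (ln_Gamma_series z n) + Im (Ln z) - Im (Ln (z + of_nat (Suc n)))
      = Im (ln_Gamma_series (z + 1) n)) sequentially"
    using eventually_gt_at_top[of "0::nat"]
    by eventually_elim (simp only: Im_ln_Gamma_series_plus1[OF assms])
  ultimately have "(\<lambda>n. Im (ln_Gamma_series (z + 1) n)) \<longlonglongrightarrow> Im (ln_Gamma z) + Im (Ln z) - 0"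
    by (rule Lim_transform_eventually)
  with lim show ?thesis
    using LIMSEQ_unique by simp
qed

lemma Gamma_one_minus_cnj_divide_Gamma:
  fixes b :: complex
  assumes "b \<notin> \<int>"
  defines "a \<equiv> 1 - cnj b"
  shows "Gamma a / Gamma b = of_real ((cmod (Gamma a))\<^sup>2 / pi) * sin (of_real pi * b)"
proof -
  have "1 - b \<notin> \<int>"
  proof
    assume "1 - b \<in> \<int>"
    then have "1 - (1 - b) \<in> \<int>"
      by (rule Ints_diff[OF Ints_1])
    with assms(1) show False
      by simp
  qed
  then have "b \<notin> \<int>\<^sub>\<le>\<^sub>0" "1 - b \<notin> \<int>\<^sub>\<le>\<^sub>0"
    using assms(1) nonpos_Ints_subset_Ints by blast+
  then have "Gamma b \<noteq> 0" "Gamma (1 - b) \<noteq> 0"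
    by (simp_all add: Gamma_eq_zero_iff)
  moreover have "Gamma (1 - b) = cnj (Gamma a)"
    by (simp add: a_def cnj_Gamma)
  ultimately have "Gamma a \<noteq> 0" and reflection: "Gamma b * cnj (Gamma a) = of_real pi / sin (of_real pi * b)"
    using Gamma_reflection_complex[of b] by auto
  with \<open>Gamma b \<noteq> 0\<close> have "sin (of_real pi * b) \<noteq> 0"
    by (metis divide_eq_0_iff mult_eq_0_iff complex_cnj_zero_iff)
  with reflection have "Gamma b * (cnj (Gamma a) * sin (of_real pi * b)) = of_real pi"
    by (simp add: field_simps)
  with \<open>Gamma b \<noteq> 0\<close> have "Gamma a / Gamma b = Gamma a * cnj (Gamma a) * sin (of_real pi * b) / of_real pi"
    by (simp add: field_simps)
  also have "Gamma a * cnj (Gamma a) = of_real ((cmod (Gamma a))\<^sup>2)"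
    by (simp add: complex_mult_cnj cmod_power2)
  finally show ?thesis
    by simp
qed

lemma Im_Ln_second_quadrant:
  assumes "Re z < 0" "0 < Im z"
  shows "pi/2 < Im (Ln z) \<and> Im (Ln z) < pi"
proof -
  have "z \<noteq> 0"
    using assms by auto
  then have "0 < Im (Ln z)" "Im (Ln z) < pi" "pi/2 \<le> \<bar>Im (Ln z)\<bar>" "Im (Ln z) \<noteq> pi/2"
    using assms Im_Ln_pos_lt[of z] Re_Ln_pos_lt[of z] Im_Ln_eq_pi_half(1)[of z] by auto
  then show ?thesis
    by linarith
qed

lemma two_pi_le_abs_2pi_multiple:
  fixes n :: int
  assumes "n \<noteq> 0"
  shows "2 * pi \<le> \<bar>2 * pi * of_int n\<bar>"
proof -
  have "2 * pi * 1 \<le> 2 * pi * \<bar>of_int n\<bar>"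
    using assms by (intro mult_left_mono) auto
  then show ?thesis
    by (simp add: abs_mult)
qed

lemma near_2pi_multiple_abs_less_or_gt_pi:
  fixes n :: int
  assumes "\<bar>x - 2 * pi * of_int n\<bar> < \<epsilon>" "\<epsilon> \<le> pi"
  shows "\<bar>x\<bar> < \<epsilon> \<or> pi < \<bar>x\<bar>"
proof (cases "n = 0")
  case False
  with assms two_pi_le_abs_2pi_multiple show ?thesis
    by fastforce
qed (use assms in simp)

lemma continuous_near_2pi_multiples_abs_less:
  fixes g :: "real \<Rightarrow> real"
  assumes cont: "continuous_on {a..b} g" and "a \<le> b" "\<epsilon> \<le> pi" "\<bar>g a\<bar> < \<epsilon>"
    and near: "\<And>x. x \<in> {a..b} \<Longrightarrow> \<exists>n::int. \<bar>g x - 2 * pi * of_int n\<bar> < \<epsilon>"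
  shows "\<bar>g b\<bar> < \<epsilon>"
proof (rule ccontr)
  have dichotomy: "\<bar>g x\<bar> < \<epsilon> \<or> pi < \<bar>g x\<bar>" if "x \<in> {a..b}" for x
    using near[OF that] near_2pi_multiple_abs_less_or_gt_pi \<open>\<epsilon> \<le> pi\<close> by blast
  assume "\<not> \<bar>g b\<bar> < \<epsilon>"
  with dichotomy[of b] \<open>a \<le> b\<close> consider "pi \<le> g b" | "g b \<le> - pi"
    by fastforce
  then obtain x where "x \<in> {a..b}" "\<bar>g x\<bar> = pi"
  proof cases
    case 1
    then obtain x where "a \<le> x" "x \<le> b" "g x = pi"
      using IVT'[of g a pi b] cont \<open>a \<le> b\<close> \<open>\<bar>g a\<bar> < \<epsilon>\<close> \<open>\<epsilon> \<le> pi\<close> by force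
    then show ?thesis
      using that by auto
  next
    case 2
    then obtain x where "a \<le> x" "x \<le> b" "g x = - pi"
      using IVT2'[of g b "- pi" a] cont \<open>a \<le> b\<close> \<open>\<bar>g a\<bar> < \<epsilon>\<close> \<open>\<epsilon> \<le> pi\<close> by force
    then show ?thesis
      using that by auto
  qed
  with dichotomy \<open>\<epsilon> \<le> pi\<close> show False
    by fastforce
qed

lemma Complex_quarter_notin_Ints: "Complex (1/4) y \<notin> \<int>"
proof
  assume "Complex (1/4) y \<in> \<int>"
  then obtain m :: int where "Complex (1/4) y = of_int m"
    by (elim Ints_cases)
  then have "4 * real_of_int m = 1"
    by (simp add: complex_eq_iff)
  then have "4 * m = 1"
    by linarith
  then show False
    by presburger
qed

lemma abs_Im_Ln_sin_quarter_less: "\<bar>Im (Ln (sin (of_real pi * Complex (1/4) y)))\<bar> < pi/4"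
proof -
  define s where "s = sin (of_real pi * Complex (1/4) y)"
  define Y where "Y = pi * y"
  have Re_s: "Re s = sqrt 2 / 2 * ((exp Y + exp (- Y)) / 2)"
    by (simp add: s_def Re_sin Y_def sin_45)
  have Im_s: "Im s = sqrt 2 / 2 * ((exp Y - exp (- Y)) / 2)"
    by (simp add: s_def Im_sin Y_def cos_45)
  have "Re s > 0"
    unfolding Re_s by (intro mult_pos_pos) (auto intro: add_pos_pos)
  then have "Im (Ln s) = arctan (Im s / Re s)"
    by (subst Im_Ln_eq) auto
  also have "Im s / Re s = (exp Y - exp (- Y)) / (exp Y + exp (- Y))"
    unfolding Re_s Im_s by simp
  finally have "\<bar>Im (Ln s)\<bar> = arctan \<bar>(exp Y - exp (- Y)) / (exp Y + exp (- Y))\<bar>"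
    by (simp add: abs_if arctan_minus)
  also have "\<dots> < arctan 1"
  proof -
    have "\<bar>exp Y - exp (- Y)\<bar> < exp Y + exp (- Y)"
      using exp_gt_zero[of Y] exp_gt_zero[of "- Y"] by linarith
    then have "\<bar>(exp Y - exp (- Y)) / (exp Y + exp (- Y))\<bar> < 1"
      by (simp add: abs_divide)
    then show ?thesis
      by (simp only: arctan_less_iff)
  qed
  finally show ?thesis
    by (simp add: s_def arctan_one)
qed

definition quarter_phase :: "real \<Rightarrow> real" where
  "quarter_phase y = Im (ln_Gamma (Complex (3/4) y)) - Im (ln_Gamma (Complex (1/4) y))"

lemma quarter_phase_near_2pi_multiple: "\<exists>n::int. \<bar>quarter_phase y - 2 * pi * of_int n\<bar> < pi/4"
proof -
  define a where "a = Complex (3/4) y"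
  define b where "b = Complex (1/4) y"
  have "a = 1 - cnj b"
    by (simp add: a_def b_def complex_eq_iff)
  then have ratio: "Gamma a / Gamma b = of_real ((cmod (Gamma a))\<^sup>2 / pi) * sin (of_real pi * b)"
    using Gamma_one_minus_cnj_divide_Gamma[OF Complex_quarter_notin_Ints] by (simp add: b_def)
  have "a \<notin> \<int>\<^sub>\<le>\<^sub>0" "b \<notin> \<int>\<^sub>\<le>\<^sub>0"
    by (auto simp: a_def b_def complex_eq_iff elim!: nonpos_Ints_cases)
  then have "exp (ln_Gamma a - ln_Gamma b) = Gamma a / Gamma b" "Gamma a \<noteq> 0" "Gamma b \<noteq> 0"
    by (simp_all add: exp_diff Gamma_complex_altdef Gamma_eq_zero_iff)
  then obtain n :: int where n: "ln_Gamma a - ln_Gamma b = Ln (Gamma a / Gamma b) + of_int (2 * n) * pi * \<i>"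
    using exp_eq[of "ln_Gamma a - ln_Gamma b" "Ln (Gamma a / Gamma b)"] by auto
  have "sin (of_real pi * b) \<noteq> 0"
    using ratio \<open>Gamma a \<noteq> 0\<close> \<open>Gamma b \<noteq> 0\<close> by auto
  moreover have "0 < (cmod (Gamma a))\<^sup>2 / pi"
    using \<open>Gamma a \<noteq> 0\<close> by simp
  ultimately have "Im (Ln (Gamma a / Gamma b)) = Im (Ln (sin (of_real pi * b)))"
    unfolding ratio by (simp add: Ln_times_of_real Ln_of_real del: of_real_divide of_real_power)
  with n have "quarter_phase y - 2 * pi * of_int n = Im (Ln (sin (of_real pi * b)))"
    unfolding quarter_phase_def a_def b_def by (simp add: algebra_simps)
  with abs_Im_Ln_sin_quarter_less[of y] have "\<bar>quarter_phase y - 2 * pi * of_int n\<bar> < pi/4"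
    by (simp add: b_def)
  then show ?thesis ..
qed

lemma quarter_phase_0: "quarter_phase 0 = 0"
proof -
  have "Complex (3/4) 0 = of_real (3/4)" "Complex (1/4) 0 = of_real (1/4)"
    by (simp_all add: complex_eq_iff)
  then show ?thesis
    unfolding quarter_phase_def by (simp only: ln_Gamma_complex_of_real Im_complex_of_real)
qed

lemma abs_quarter_phase_less: "\<bar>quarter_phase y\<bar> < pi/4"
proof -
  have cont: "continuous_on A quarter_phase" for A
    unfolding quarter_phase_def by (intro continuous_intros continuous_on_Im_ln_Gamma_Complex) auto
  have "\<bar>quarter_phase (s * z)\<bar> < pi/4" if "0 \<le> z" "s \<in> {1, -1}" for s z :: real
  proof (rule continuous_near_2pi_multiples_abs_less[where g = "\<lambda>x. quarter_phase (s * x)"])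
    show "continuous_on {0..z} (\<lambda>x. quarter_phase (s * x))"
      by (intro continuous_on_compose2[OF cont] continuous_intros) auto
  qed (use that quarter_phase_0 quarter_phase_near_2pi_multiple in auto)
  from this[of y 1] this[of "- y" "- 1"] show ?thesis
    by (cases "0 \<le> y") auto
qed

lemma fgam_eq:
  "fgam s t = - pi/4 + Im (ln_Gamma (Complex (3/4 - s/2) (t/2))) - Im (ln_Gamma (Complex (1/4 - s/2) (t/2)))"
  by (simp add: fgam_def kappa_def)

lemma fgam_has_real_derivative:
  assumes "t \<noteq> 0"
  shows "((\<lambda>s. fgam s t) has_real_derivative
           (Im (Digamma (Complex (1/4 - \<sigma>/2) (t/2))) - Im (Digamma (Complex (3/4 - \<sigma>/2) (t/2)))) / 2) (at \<sigma>)"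
proof -
  have "((\<lambda>s. Im (ln_Gamma (Complex (c - s/2) (t/2)))) has_real_derivative
          Im (Digamma (Complex (c - \<sigma>/2) (t/2))) * (- 1/2)) (at \<sigma>)" for c
    using assms by (intro DERIV_chain2[OF has_real_derivative_Im_ln_Gamma_Complex]) (auto intro!: derivative_eq_intros)
  from DERIV_diff[OF DERIV_add[OF DERIV_const[of "- pi/4"] this[of "3/4"]] this[of "1/4"]]
  show ?thesis
    unfolding fgam_eq by (rule DERIV_cong) (simp add: algebra_simps)
qed

lemma continuous_on_fgam:
  assumes "t \<noteq> 0"
  shows "continuous_on A (\<lambda>s. fgam s t)"
  using DERIV_isCont[OF fgam_has_real_derivative[OF assms]]
  by (intro continuous_at_imp_continuous_on) auto

lemma fgam_derivative_pos:
  assumes "0 < t" "\<sigma> < 1"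
  shows "0 < (Im (Digamma (Complex (1/4 - \<sigma>/2) (t/2))) - Im (Digamma (Complex (3/4 - \<sigma>/2) (t/2)))) / 2"
  using Im_Digamma_Complex_less[of "1/4 - \<sigma>/2" "3/4 - \<sigma>/2" "t/2"] assms by simp

lemma fgam_strict_mono:
  assumes "0 < t" "a < b" "b \<le> 1"
  shows "fgam a t < fgam b t"
proof (rule DERIV_pos_imp_increasing_open[OF \<open>a < b\<close>])
  fix x assume "a < x" "x < b"
  then show "\<exists>y. ((\<lambda>s. fgam s t) has_real_derivative y) (at x) \<and> 0 < y"
    using fgam_has_real_derivative[of t x] fgam_derivative_pos[of t x] assms by auto
qed (use continuous_on_fgam \<open>0 < t\<close> in simp)

lemma fgam_0_bounds:
  assumes "0 < t"
  shows "- (pi/2) < fgam 0 t \<and> fgam 0 t < 0"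
proof -
  have "fgam 0 t = - pi/4 + quarter_phase (t/2)"
    by (simp add: fgam_eq quarter_phase_def)
  then show ?thesis
    using abs_quarter_phase_less[of "t/2"] by linarith
qed

lemma fgam_1_bounds:
  assumes "0 < t"
  shows "0 < fgam 1 t \<and> fgam 1 t < pi"
proof -
  define z where "z = Complex (-1/4) (t/2)"
  have "z + 1 = Complex (3/4) (t/2)"
    by (simp add: z_def complex_eq_iff)
  moreover have "z \<notin> \<int>\<^sub>\<le>\<^sub>0"
    using assms by (auto simp: z_def complex_eq_iff elim!: nonpos_Ints_cases)
  ultimately have "Im (ln_Gamma (Complex (3/4) (t/2))) = Im (ln_Gamma z) + Im (Ln z)"
    by (simp flip: Im_ln_Gamma_plus1)
  then have "fgam 1 t = - pi/4 - quarter_phase (t/2) + Im (Ln z)"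
    by (simp add: fgam_eq quarter_phase_def z_def)
  moreover have "pi/2 < Im (Ln z) \<and> Im (Ln z) < pi"
    using assms by (intro Im_Ln_second_quadrant) (auto simp: z_def)
  ultimately show ?thesis
    using abs_quarter_phase_less[of "t/2"] by linarith
qed

lemma fgam_unique_zero:
  assumes "0 < t"
  shows "\<exists>!\<sigma>. \<sigma> \<in> {0<..<1} \<and> fgam \<sigma> t = 0"
proof -
  have "fgam 0 t < 0" "0 < fgam 1 t"
    using fgam_0_bounds[OF assms] fgam_1_bounds[OF assms] by auto
  moreover have "continuous_on {0..1} (\<lambda>s. fgam s t)"
    using continuous_on_fgam assms by simp
  ultimately obtain \<sigma> where "0 \<le> \<sigma>" "\<sigma> \<le> 1" "fgam \<sigma> t = 0"
    using IVT'[of "\<lambda>s. fgam s t" 0 0 1] by auto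
  with \<open>fgam 0 t < 0\<close> \<open>0 < fgam 1 t\<close> have "\<sigma> \<in> {0<..<1}"
    by (auto simp: less_le)
  moreover have "u = \<sigma>" if "u \<in> {0<..<1}" "fgam u t = 0" for u
    using fgam_strict_mono[OF assms, of u \<sigma>] fgam_strict_mono[OF assms, of \<sigma> u] that
      \<open>\<sigma> \<le> 1\<close> \<open>fgam \<sigma> t = 0\<close> by (cases u \<sigma> rule: linorder_cases) auto
  ultimately show ?thesis
    using \<open>fgam \<sigma> t = 0\<close> by blast
qed

lemma fgam_ne_2pi_multiple:
  assumes "0 < t" "\<sigma> \<in> {0<..<1}" "n \<noteq> 0"
  shows "fgam \<sigma> t \<noteq> 2 * pi * of_int n"
proof -
  have "- pi < fgam \<sigma> t" "fgam \<sigma> t < pi"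
    using fgam_strict_mono[OF \<open>0 < t\<close>, of 0 \<sigma>] fgam_strict_mono[OF \<open>0 < t\<close>, of \<sigma> 1]
      fgam_0_bounds[OF \<open>0 < t\<close>] fgam_1_bounds[OF \<open>0 < t\<close>] assms(2) by auto
  moreover have "2 * pi \<le> \<bar>2 * pi * of_int n\<bar>"
    using two_pi_le_abs_2pi_multiple[OF \<open>n \<noteq> 0\<close>] .
  ultimately show ?thesis
    by auto
qed

theorem lemma5p1:
  shows "(\<forall>t::real. t > 0 \<longrightarrow> - (pi/2) < fgam 0 t \<and> fgam 0 t < 0)
       \<and> (\<forall>t::real. t > 0 \<longrightarrow> 0 < fgam 1 t \<and> fgam 1 t < pi)
       \<and> (\<forall>\<sigma> t::real. 0 < \<sigma> \<and> \<sigma> < 1 \<and> t > 0 \<longrightarrow>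
            (\<exists>D. ((\<lambda>s. fgam s t) has_real_derivative D) (at \<sigma>) \<and> D > 0))
       \<and> (\<forall>t::real. t > 0 \<longrightarrow> (\<exists>!\<sigma>. \<sigma> \<in> {0<..<1} \<and> fgam \<sigma> t = 0))
       \<and> (\<forall>t::real. t > 0 \<longrightarrow> (\<forall>n::int. n \<noteq> 0 \<longrightarrow>
            \<not> (\<exists>\<sigma>. \<sigma> \<in> {0<..<1} \<and> fgam \<sigma> t = 2 * pi * of_int n)))"
proof (intro conjI allI impI)
  fix t :: real
  assume "0 < t"
  show "- (pi/2) < fgam 0 t" "fgam 0 t < 0"
    using fgam_0_bounds[OF \<open>0 < t\<close>] by simp_all
  show "0 < fgam 1 t" "fgam 1 t < pi"
    using fgam_1_bounds[OF \<open>0 < t\<close>] by simp_all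
  show "\<exists>!\<sigma>. \<sigma> \<in> {0<..<1} \<and> fgam \<sigma> t = 0"
    using fgam_unique_zero[OF \<open>0 < t\<close>] .
  show "\<not> (\<exists>\<sigma>. \<sigma> \<in> {0<..<1} \<and> fgam \<sigma> t = 2 * pi * of_int n)" if "n \<noteq> 0" for n
    using fgam_ne_2pi_multiple[OF \<open>0 < t\<close> _ that] by blast
next
  fix \<sigma> t :: real
  assume "0 < \<sigma> \<and> \<sigma> < 1 \<and> 0 < t"
  then show "\<exists>D. ((\<lambda>s. fgam s t) has_real_derivative D) (at \<sigma>) \<and> D > 0"
    using fgam_has_real_derivative[of t \<sigma>] fgam_derivative_pos[of t \<sigma>] by auto
qed

end
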